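(* Let $\varepsilon>0$ be rational and let $f:\mathbb{N}\to\mathbb{N}$ satisfy $f(n)\ge n\varepsilon$ for all $n\ge0$. Then for all $A\subseteq\mathbb{N}$ we have $\bar d(f[A])\le\frac{1}{\varepsilon}\bar d(A)$. In particular $f\in\mathscr{C}_{I_{\bar d=0}}$.
   Context: $\mathbb{N}=\{0,1,2,\dots\}$. For $A\subseteq\mathbb{N}$, $\bar d(A)=\limsup_{n\to\infty}\frac{|A\cap[0,n)|}{n}$. $\mathscr{C}_{I_{\bar d=0}}$ is the set of all finitary functions $f:\mathbb{N}^k\to\mathbb{N}$ ($k\ge1$) such that $\bar d(f[A^k])=0$ whenever $\bar d(A)=0$. *)

theory Defs
  imports Complex_Main "HOL-Library.Liminf_Limsup" "HOL-Library.Extended_Real"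
begin

definition upper_density :: "nat set \<Rightarrow> ereal" where
  "upper_density A = limsup (\<lambda>n. ereal (real (card (A \<inter> {0..<n})) / real n))"

text \<open>Finitary functions N^k \<rightarrow> N are represented as pairs (k, g) with
  g :: nat list \<Rightarrow> nat, a k-tuple being a list of length k (values of g on lists
  of other lengths are irrelevant). The image f[A^k] is the image of g on the
  length-k lists with entries in A.\<close>
definition C_Id0 :: "(nat \<times> (nat list \<Rightarrow> nat)) set" where
  "C_Id0 = {(k, g). k \<ge> 1 \<and>
     (\<forall>A. upper_density A = 0 \<longrightarrow>
        upper_density (g ` {xs. length xs = k \<and> set xs \<subseteq> A}) = 0)}"

end

theory Submission
  imports Defs "HOL-Analysis.Analysis"
begin

text \<open>Since \<open>f x \<ge> \<epsilon> x\<close>, every element of \<open>f[A]\<close> below \<open>m\<close> is the image of an element of \<open>A\<close>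
  below \<open>N m = \<lceil>m/\<epsilon>\<rceil>\<close>. Dividing the counts by \<open>m\<close> and using \<open>N m / m \<longrightarrow> 1/\<epsilon>\<close> gives
  \<open>d(f[A]) \<le> (1/\<epsilon>) \<cdot> limsup |A \<inter> [0, N m)| / N m\<close>, and as \<open>N\<close> tends to infinity the limsup along \<open>N m\<close>
  is at most the full limsup.\<close>

lemma Limsup_filter_mono:
  "F \<le> G \<Longrightarrow> Limsup F (f :: _ \<Rightarrow> 'b::complete_lattice) \<le> Limsup G f"
  unfolding Limsup_def by (rule INF_superset_mono) (auto simp: le_filter_def)

lemma limsup_compose_filterlim_le:
  fixes a :: "nat \<Rightarrow> 'b::complete_lattice"
  assumes "filterlim N sequentially sequentially"
  shows "limsup (\<lambda>m. a (N m)) \<le> limsup a"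
proof -
  have "limsup (\<lambda>m. a (N m)) \<le> Limsup (filtermap N sequentially) a"
    by (rule Limsup_filtermap_ge)
  also have "\<dots> \<le> limsup a"
    using assms unfolding filterlim_def by (rule Limsup_filter_mono)
  finally show ?thesis .
qed

lemma upper_density_nonneg: "0 \<le> upper_density A"
  unfolding upper_density_def by (rule le_Limsup) auto

lemma card_image_Int_atLeastLessThan_le:
  fixes f :: "nat \<Rightarrow> nat"
  assumes "\<And>x. f x < m \<Longrightarrow> x < n"
  shows "card (f ` A \<inter> {0..<m}) \<le> card (A \<inter> {0..<n})"
proof -
  have "f ` A \<inter> {0..<m} \<subseteq> f ` (A \<inter> {0..<n})"
    using assms by auto
  hence "card (f ` A \<inter> {0..<m}) \<le> card (f ` (A \<inter> {0..<n}))"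
    by (intro card_mono) simp_all
  also have "\<dots> \<le> card (A \<inter> {0..<n})"
    by (rule card_image_le) auto
  finally show ?thesis .
qed

lemma upper_density_image_le:
  fixes f N :: "nat \<Rightarrow> nat" and c :: real
  assumes below: "\<And>x m. f x < m \<Longrightarrow> x < N m"
    and ratio: "(\<lambda>m. real (N m) / real m) \<longlonglongrightarrow> c" and "c > 0"
  shows "upper_density (f ` A) \<le> ereal c * upper_density A"
proof -
  define a where "a n = ereal (real (card (A \<inter> {0..<n})) / real n)" for n
  have count: "ereal (real (card (f ` A \<inter> {0..<m})) / real m)
      \<le> ereal (real (N m) / real m) * a (N m)" for m
  proof -
    have le: "card (f ` A \<inter> {0..<m}) \<le> card (A \<inter> {0..<N m})"
      using below by (rule card_image_Int_atLeastLessThan_le)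
    have "card (A \<inter> {0..<N m}) \<le> N m"
      by (metis card_atLeastLessThan card_mono finite_atLeastLessThan inf_le2 diff_zero)
    \<comment> \<open>so the factorisation below also holds when \<open>N m = 0\<close>\<close>
    hence "real (card (A \<inter> {0..<N m})) / real m
        = real (N m) / real m * (real (card (A \<inter> {0..<N m})) / real (N m))"
      by (cases "N m = 0") auto
    moreover have "real (card (f ` A \<inter> {0..<m})) / real m \<le> real (card (A \<inter> {0..<N m})) / real m"
      using le by (intro divide_right_mono) auto
    ultimately show ?thesis by (simp add: a_def)
  qed
  have "filterlim (\<lambda>m. real (N m) / real m * real m) at_top sequentially"
    using ratio \<open>c > 0\<close> filterlim_real_sequentially by (rule filterlim_tendsto_pos_mult_at_top)
  moreover have "eventually (\<lambda>m. real (N m) / real m * real m = real (N m)) sequentially"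
    using eventually_gt_at_top[of 0] by eventually_elim simp
  ultimately have "filterlim (\<lambda>m. real (N m)) at_top sequentially"
    using filterlim_cong by fastforce
  hence N_tendsto: "filterlim N sequentially sequentially"
    by (simp add: filterlim_sequentially_iff_filterlim_real)
  have "upper_density (f ` A) \<le> limsup (\<lambda>m. ereal (real (N m) / real m) * a (N m))"
    unfolding upper_density_def by (intro Limsup_mono always_eventually allI count)
  also have "\<dots> = ereal c * limsup (\<lambda>m. a (N m))"
    using ratio \<open>c > 0\<close> by (intro ereal_limsup_lim_mult) (auto simp: lim_ereal)
  also have "\<dots> \<le> ereal c * limsup a"
    using limsup_compose_filterlim_le[OF N_tendsto] \<open>c > 0\<close>
    by (intro ereal_mult_left_mono) auto
  finally show ?thesis unfolding upper_density_def a_def .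
qed

lemma ceiling_divide_ratio_tendsto:
  fixes \<epsilon> :: real
  assumes "\<epsilon> > 0"
  shows "(\<lambda>m. real (nat \<lceil>real m / \<epsilon>\<rceil>) / real m) \<longlonglongrightarrow> 1 / \<epsilon>"
proof (rule tendsto_sandwich)
  have N: "real (nat \<lceil>real m / \<epsilon>\<rceil>) = real_of_int \<lceil>real m / \<epsilon>\<rceil>" for m
    using assms by simp
  show "eventually (\<lambda>m. 1 / \<epsilon> \<le> real (nat \<lceil>real m / \<epsilon>\<rceil>) / real m) sequentially"
    using eventually_gt_at_top[of "0::nat"]
  proof eventually_elim
    case (elim m)
    have "real m / \<epsilon> \<le> real (nat \<lceil>real m / \<epsilon>\<rceil>)" by (simp add: N)
    thus ?case using elim assms by (simp add: field_simps)
  qed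
  show "eventually (\<lambda>m. real (nat \<lceil>real m / \<epsilon>\<rceil>) / real m \<le> 1 / \<epsilon> + 1 / real m) sequentially"
    using eventually_gt_at_top[of "0::nat"]
  proof eventually_elim
    case (elim m)
    have "real (nat \<lceil>real m / \<epsilon>\<rceil>) \<le> real m / \<epsilon> + 1"
      by (simp add: N of_int_ceiling_le_add_one)
    hence "real (nat \<lceil>real m / \<epsilon>\<rceil>) / real m \<le> (real m / \<epsilon> + 1) / real m"
      by (intro divide_right_mono) auto
    also have "\<dots> = 1 / \<epsilon> + 1 / real m" using elim by (simp add: field_simps)
    finally show ?case .
  qed
  show "(\<lambda>m. 1 / \<epsilon> + 1 / real m) \<longlonglongrightarrow> 1 / \<epsilon>"
    using tendsto_add[OF tendsto_const lim_inverse_n'] by simp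
qed simp

lemma image_lists_length_one:
  "(\<lambda>xs. g (hd xs)) ` {xs. length xs = 1 \<and> set xs \<subseteq> A} = g ` A"
proof
  show "(\<lambda>xs. g (hd xs)) ` {xs. length xs = 1 \<and> set xs \<subseteq> A} \<subseteq> g ` A"
    by (auto simp: length_Suc_conv)
  show "g ` A \<subseteq> (\<lambda>xs. g (hd xs)) ` {xs. length xs = 1 \<and> set xs \<subseteq> A}"
    by (auto intro!: image_eqI[where x = "[_]"])
qed

theorem mainTheorem9:
  fixes \<epsilon> :: real and f :: "nat \<Rightarrow> nat"
  assumes "\<epsilon> \<in> \<rat>" and "\<epsilon> > 0"
    and "\<And>n. real (f n) \<ge> real n * \<epsilon>"
  shows "(\<forall>A. upper_density (f ` A) \<le> ereal (1 / \<epsilon>) * upper_density A)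
         \<and> (1, \<lambda>xs. f (hd xs)) \<in> C_Id0"
proof -
  have below: "x < nat \<lceil>real m / \<epsilon>\<rceil>" if "f x < m" for x m
  proof -
    have "real x * \<epsilon> < real m" using assms(3)[of x] that by linarith
    hence "real x < real m / \<epsilon>" using \<open>\<epsilon> > 0\<close> by (simp add: field_simps)
    thus ?thesis by linarith
  qed
  have density: "upper_density (f ` A) \<le> ereal (1 / \<epsilon>) * upper_density A" for A
    using upper_density_image_le[OF below ceiling_divide_ratio_tendsto] \<open>\<epsilon> > 0\<close> by simp
  have "upper_density (f ` A) = 0" if "upper_density A = 0" for A
    using density[of A] that upper_density_nonneg[of "f ` A"] by simp
  hence "(1, \<lambda>xs. f (hd xs)) \<in> C_Id0"
    using image_lists_length_one[of f] by (simp add: C_Id0_def)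
  with density show ?thesis by blast
qed

end
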